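(* Let $\mathbf A,\mathbf B\in\mathbb C^{n\times n}$, $k=\operatorname{Ind}\mathbf A$, $r=\operatorname{rank}\mathbf A^{k}$, and for $l\ge 0$ let $\hat{\mathbf B}^{(l)}=\mathbf A^{l}\mathbf B=(\hat b^{(l)}_{ij})$ with $j$-th column $\hat{\mathbf b}^{(l)}_{.j}$ (so $\hat{\mathbf B}^{(0)}=\mathbf B=(b_{ij})$). Let \[\mathbf X(t)=\mathbf A^{D}\mathbf B+\sum_{s=1}^{k}\frac{(-1)^{s-1}}{s!}\left(\mathbf A^{s-1}\mathbf B-\mathbf A^{D}\mathbf A^{s}\mathbf B\right)t^{s}\] (the partial solution of $\mathbf X'+\mathbf A\mathbf X=\mathbf B$). Writing $\Delta=\sum_{\beta\in J_{r,n}}\left|(\mathbf A^{k+1})^{\beta}_{\beta}\right|$ and $N_{ij}(l)=\sum_{\beta\in J_{r,n}\{i\}}\left|\left(\mathbf A^{k+1}_{.i}(\hat{\mathbf b}^{(l)}_{.j})\right)^{\beta}_{\beta}\right|$, the entries of $\mathbf X(t)=(x_{ij})$ are, for all $i,j=1,\dots,n$, \[x_{ij}=\frac{N_{ij}(k)}{\Delta}+\sum_{s=1}^{k}\frac{(-1)^{s-1}}{s!}\left(\hat b^{(s-1)}_{ij}-\frac{N_{ij}(k+s)}{\Delta}\right)t^{s}.\]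
   Context: $\operatorname{Ind}\mathbf A$ is the smallest nonnegative $k$ with $\operatorname{rank}\mathbf A^{k+1}=\operatorname{rank}\mathbf A^{k}$; the Drazin inverse $\mathbf A^{D}$ is the unique $\mathbf X$ with $\mathbf A^{k+1}\mathbf X=\mathbf A^{k}$, $\mathbf X\mathbf A\mathbf X=\mathbf X$, $\mathbf A\mathbf X=\mathbf X\mathbf A$. $\mathbf M_{.i}(\mathbf c)$ denotes $\mathbf M$ with its $i$-th column replaced by $\mathbf c$. $J_{r,n}$ is the set of strictly increasing sequences of $r$ elements of $\{1,\dots,n\}$, $J_{r,n}\{i\}=\{\beta\in J_{r,n}:i\in\beta\}$, $\mathbf M^{\beta}_{\beta}$ is the principal submatrix indexed by $\beta$, $|\cdot|$ is the determinant. *)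

theory Defs
  imports "Jordan_Normal_Form.DL_Rank" "Jordan_Normal_Form.DL_Submatrix" "Jordan_Normal_Form.Determinant"
begin

text \<open>Matrices are Jordan_Normal_Form matrices; indices are 0-based (0..n-1 instead of 1..n).\<close>

definition mat_rank :: "complex mat \<Rightarrow> nat" where
  "mat_rank A = vec_space.rank (dim_row A) A"

definition mat_ind :: "complex mat \<Rightarrow> nat" where
  "mat_ind A = (LEAST k. mat_rank (A ^\<^sub>m (k+1)) = mat_rank (A ^\<^sub>m k))"

definition is_drazin_inverse :: "complex mat \<Rightarrow> complex mat \<Rightarrow> bool" where
  "is_drazin_inverse A X \<longleftrightarrow>
     X \<in> carrier_mat (dim_row A) (dim_row A) \<and>
     A ^\<^sub>m (mat_ind A + 1) * X = A ^\<^sub>m (mat_ind A) \<and>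
     X * A * X = X \<and> A * X = X * A"

definition mat_sum :: "nat \<Rightarrow> ('b \<Rightarrow> 'a::comm_monoid_add mat) \<Rightarrow> 'b set \<Rightarrow> 'a mat" where
  "mat_sum n f S = mat n n (\<lambda>(a,b). \<Sum>s\<in>S. f s $$ (a,b))"

text \<open>J_{r,n}: r-element subsets of {0..<n} (= strictly increasing sequences).\<close>
definition Jrn :: "nat \<Rightarrow> nat \<Rightarrow> nat set set" where
  "Jrn r n = {\<beta>. \<beta> \<subseteq> {..<n} \<and> card \<beta> = r}"

definition principal_sub :: "'a mat \<Rightarrow> nat set \<Rightarrow> 'a mat" where
  "principal_sub M \<beta> = submatrix M \<beta> \<beta>"

end

theory Submission
  imports Defs "Jordan_Normal_Form.Jordan_Normal_Form_Uniqueness"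
    "Jordan_Normal_Form.Jordan_Normal_Form_Existence"
begin

text \<open>Put \<open>C = A\<^sup>k\<^sup>+\<^sup>1\<close>; the Drazin axioms make \<open>G = (A\<^sup>D)\<^sup>k\<^sup>+\<^sup>1\<close> a group inverse of \<open>C\<close>
  (\<open>C G C = C\<close>, \<open>G C = C G\<close>). Write \<open>det (\<lambda> I + C) = \<Sum> p\<^sub>m \<lambda>\<^sup>m\<close> and
  \<open>adj (\<lambda> I + C) = \<Sum> Q\<^sub>m \<lambda>\<^sup>m\<close>; then \<open>p\<^sub>m\<close> is the sum of the principal minors of \<open>C\<close> of order
  \<open>n - m\<close>, and comparing coefficients in \<open>(\<lambda> I + C) adj (\<lambda> I + C) = det (\<lambda> I + C) I\<close> gives
  \<open>C Q\<^sub>m + Q\<^sub>m\<^sub>-\<^sub>1 = p\<^sub>m I\<close>. As \<open>C\<close> has index at most one, \<open>\<lambda> = 0\<close> is a zero of \<open>det (\<lambda> I + C)\<close>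
  of multiplicity exactly \<open>s = dim ker C = n - r\<close>. Hence \<open>p\<^sub>s = \<Delta> \<noteq> 0\<close>, and the recurrence together
  with the cancellation \<open>C\<^sup>2 X = 0 \<Longrightarrow> C X = 0\<close> yields \<open>C Q\<^sub>m = 0\<close> for \<open>m < s\<close>, so that
  \<open>Q\<^sub>s C\<^sup>2 w = \<Delta> C w\<close>. By Cramer's rule the entries of \<open>Q\<^sub>s y\<close> are the sums \<open>N\<close> of principal minors of
  \<open>C\<close> with a column replaced by \<open>y\<close>. For \<open>y = A\<^sup>k\<^sup>+\<^sup>l b\<close> we have \<open>y = C\<^sup>2 w\<close> with \<open>C w = A\<^sup>D A\<^sup>l b\<close>,
  so \<open>N(k + l) = \<Delta> (A\<^sup>D A\<^sup>l B)\<^sub>i\<^sub>j\<close>, and substituting into \<open>X(t)\<close> gives the formula.\<close>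

lemma mult_mat_vec_zero [simp]: "A \<in> carrier_mat nr nc \<Longrightarrow> A *\<^sub>v 0\<^sub>v nc = 0\<^sub>v nr"
  and zero_mat_mult_vec [simp]: "v \<in> carrier_vec nc \<Longrightarrow> 0\<^sub>m nr nc *\<^sub>v v = 0\<^sub>v nr"
  by (intro eq_vecI; auto simp: scalar_prod_def)+

lemma zero_smult_mat [simp]: "(0::'a::mult_zero) \<cdot>\<^sub>m A = 0\<^sub>m (dim_row A) (dim_col A)"
  by (intro eq_matI) auto

lemma smult_one_mat_mult_vec:
  fixes y :: "'a::comm_ring_1 vec"
  assumes y: "y \<in> carrier_vec n"
  shows "(k \<cdot>\<^sub>m 1\<^sub>m n) *\<^sub>v y = k \<cdot>\<^sub>v y"
proof (rule eq_vecI)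
  fix i assume "i < dim_vec (k \<cdot>\<^sub>v y)"
  hence i: "i < n" using y by simp
  have "(\<Sum>j = 0..<n. k * (if j = i then 1 else 0) * y $ j) = (\<Sum>j = 0..<n. if j = i then k * y $ j else 0)"
    by (intro sum.cong) auto
  thus "((k \<cdot>\<^sub>m 1\<^sub>m n) *\<^sub>v y) $ i = (k \<cdot>\<^sub>v y) $ i"
    using i y by (simp add: scalar_prod_def)
qed (use y in simp)

lemma pow_mat_mult_commute:
  fixes X Y :: "'a::semiring_1 mat"
  assumes X: "X \<in> carrier_mat n n" and Y: "Y \<in> carrier_mat n n" and XY: "X * Y = Y * X"
  shows "X ^\<^sub>m j * Y = Y * X ^\<^sub>m j"
proof (induction j)
  case (Suc j)
  have "X ^\<^sub>m Suc j * Y = X ^\<^sub>m j * (X * Y)"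
    using X Y by (simp add: assoc_mult_mat[of _ n n _ n _ n])
  also have "\<dots> = (X ^\<^sub>m j * Y) * X" using X Y XY by (simp add: assoc_mult_mat[of _ n n _ n _ n])
  also have "\<dots> = Y * X ^\<^sub>m Suc j" using X Y Suc by (simp add: assoc_mult_mat[of _ n n _ n _ n])
  finally show ?case .
qed (use X Y in simp)

lemma pow_mat_mult_distrib:
  fixes X Y :: "'a::semiring_1 mat"
  assumes X: "X \<in> carrier_mat n n" and Y: "Y \<in> carrier_mat n n" and XY: "X * Y = Y * X"
  shows "(X * Y) ^\<^sub>m j = X ^\<^sub>m j * Y ^\<^sub>m j"
proof (induction j)
  case (Suc j)
  have "(X * Y) ^\<^sub>m Suc j = X ^\<^sub>m j * ((Y ^\<^sub>m j * X) * Y)"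
    using X Y Suc by (simp add: assoc_mult_mat[of _ n n _ n _ n])
  also have "Y ^\<^sub>m j * X = X * Y ^\<^sub>m j" by (rule pow_mat_mult_commute[OF Y X XY[symmetric]])
  also have "(X * Y ^\<^sub>m j) * Y = X * (Y ^\<^sub>m j * Y)" by (rule assoc_mult_mat) (use X Y in auto)
  also have "X ^\<^sub>m j * (X * (Y ^\<^sub>m j * Y)) = (X ^\<^sub>m j * X) * (Y ^\<^sub>m j * Y)"
    by (rule assoc_mult_mat[symmetric]) (use X Y in auto)
  finally show ?case by simp
qed (use X Y in simp)

lemma pow_mat_add:
  fixes X :: "'a::semiring_1 mat"
  assumes X: "X \<in> carrier_mat n n"
  shows "X ^\<^sub>m (i + j) = X ^\<^sub>m i * X ^\<^sub>m j"
  by (induction j) (use X in \<open>simp_all add: assoc_mult_mat[of _ n n _ n _ n]\<close>)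

lemma pow_mat_idempotent: "E * E = E \<Longrightarrow> E ^\<^sub>m Suc j = E"
  by (induction j) simp_all

lemma kernel_dim_cong:
  assumes "mat_kernel A = mat_kernel B" and "dim_col A = dim_col B"
  shows "kernel_dim A = kernel_dim B"
  using assms unfolding kernel_dim_def by simp

lemma rank_nullity_mat:
  fixes M :: "'a::field mat"
  assumes M: "M \<in> carrier_mat n n"
  shows "vec_space.rank n M + kernel_dim M = n"
proof -
  interpret V: vec_space "TYPE('a)" n .
  interpret lm: linear_map class_ring "module_vec TYPE('a) n" "module_vec TYPE('a) n" "\<lambda>v. M *\<^sub>v v"
  proof (intro linear_map.intro mod_hom.intro V.vectorspace_axioms V.module_axioms)
    show "mod_hom_axioms class_ring (module_vec TYPE('a) n) (module_vec TYPE('a) n) (\<lambda>v. M *\<^sub>v v)"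
      unfolding mod_hom_axioms_def LinearCombinations.module_hom_def using M
      by (auto simp: mult_add_distrib_mat_vec mult_mat_vec)
  qed
  have im: "lm.imT = V.span (set (cols M))"
    using V.col_space_eq[OF M] M unfolding lm.im_def V.col_space_def by auto
  have ker: "lm.kerT = mat_kernel M"
    using M unfolding lm.ker_def mat_kernel_def by auto
  have "V.rank M = vectorspace.dim class_ring (V.vs lm.imT)" unfolding V.rank_def im ..
  moreover have "kernel_dim M = vectorspace.dim class_ring (V.vs lm.kerT)"
    unfolding kernel_dim_def ker using M by simp
  ultimately show ?thesis using lm.rank_nullity_main(1) V.fin_dim V.dim_is_n by simp
qed

lemma adj_mat_mult_vec_nth:
  fixes M :: "'a::comm_ring_1 mat"
  assumes M: "M \<in> carrier_mat n n" and b: "b \<in> carrier_vec n" and k: "k < n"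
  shows "(adj_mat M *\<^sub>v b) $ k = det (replace_col M b k)"
proof -
  have Mb: "replace_col M b k \<in> carrier_mat n n" using M by (auto simp: replace_col_def)
  have "(adj_mat M *\<^sub>v b) $ k = row (adj_mat M) k \<bullet> b" using adj_mat[OF M] b k by auto
  also have "\<dots> = det (replace_col M b k)" unfolding scalar_prod_def using b k M
    by (subst laplace_expansion_column[OF Mb k], auto intro!: sum.cong arg_cong[of _ _ det]
      arg_cong[of _ _ "\<lambda> x. _ * x"] eq_matI
      simp: replace_col_def adj_mat_def Matrix.row_def cofactor_def mat_delete_def ac_simps)
  finally show ?thesis .
qed

section \<open>Principal minors and the determinant of \<open>\<lambda> I + C\<close>\<close>

lemma bij_betw_pick:
  assumes "finite U"
  shows "bij_betw (pick U) {..<card U} U"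
proof (rule bij_betw_imageI)
  show "inj_on (pick U) {..<card U}"
    by (intro strict_mono_on_imp_inj_on strict_mono_onI) (simp add: pick_mono_le)
  show "pick U ` {..<card U} = U"
  proof (intro equalityI subsetI)
    show "x \<in> U" if "x \<in> pick U ` {..<card U}" for x
      using that pick_in_set_le by auto
    show "x \<in> pick U ` {..<card U}" if x: "x \<in> U" for x
    proof -
      have "card {a\<in>U. a < x} < card U"
        using x assms by (intro psubset_card_mono) auto
      thus ?thesis using pick_card_in_set[OF x] by (intro image_eqI[where x = "card {a\<in>U. a < x}"]) simp_all
    qed
  qed
qed

text \<open>Principal minors are taken via the Leibniz formula over the permutations of the index set
  itself, which avoids renumbering it as \<open>{0..<card U}\<close>.\<close>
definition det_on :: "'a::comm_ring_1 mat \<Rightarrow> nat set \<Rightarrow> 'a" where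
  "det_on P U = (\<Sum>\<pi> | \<pi> permutes U. signof \<pi> * (\<Prod>a\<in>U. P $$ (a, \<pi> a)))"

lemma det_on_reindex:
  assumes h: "bij_betw h {0..<m} U"
  shows "det_on P U = (\<Sum>\<sigma> | \<sigma> permutes {0..<m}. signof \<sigma> * (\<Prod>a = 0..<m. P $$ (h a, h (\<sigma> a))))"
proof -
  have inj: "inj_on h {0..<m}" using h by (rule bij_betw_imp_inj_on)
  let ?H = "map_permutation {0..<m} h"
  have H: "bij_betw ?H {\<sigma>. \<sigma> permutes {0..<m}} {\<pi>. \<pi> permutes U}"
  proof (rule bij_betwI[where g = "map_permutation U (inv_into {0..<m} h)"])
    show "map_permutation U (inv_into {0..<m} h) (?H \<sigma>) = \<sigma>" if "\<sigma> \<in> {\<sigma>. \<sigma> permutes {0..<m}}" for \<sigma>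
      by (rule map_permutation_compose_inv[OF h])
        (use that in \<open>simp_all add: inv_into_f_f[OF inj]\<close>)
    show "?H (map_permutation U (inv_into {0..<m} h) \<pi>) = \<pi>" if "\<pi> \<in> {\<pi>. \<pi> permutes U}" for \<pi>
      by (rule map_permutation_compose_inv[OF bij_betw_inv_into[OF h]])
        (use that in \<open>simp_all add: bij_betw_inv_into_right[OF h]\<close>)
  qed (auto intro: map_permutation_permutes h bij_betw_inv_into)
  have summand: "signof (?H \<sigma>) * (\<Prod>a\<in>U. P $$ (a, ?H \<sigma> a))
      = signof \<sigma> * (\<Prod>a = 0..<m. P $$ (h a, h (\<sigma> a)))" if \<sigma>: "\<sigma> permutes {0..<m}" for \<sigma>
  proof -
    have "sign (?H \<sigma>) = sign \<sigma>"
      using sign_map_permutation[OF inj \<sigma> finite_atLeastLessThan] .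
    moreover have "(\<Prod>a\<in>U. P $$ (a, ?H \<sigma> a)) = (\<Prod>a = 0..<m. P $$ (h a, h (\<sigma> a)))"
      using \<sigma> by (simp add: prod.reindex_bij_betw[OF h, symmetric] map_permutation_apply[OF inj]
          permutes_in_image)
    ultimately show ?thesis by simp
  qed
  have "det_on P U = (\<Sum>\<sigma> | \<sigma> permutes {0..<m}. signof (?H \<sigma>) * (\<Prod>a\<in>U. P $$ (a, ?H \<sigma> a)))"
    unfolding det_on_def by (rule sum.reindex_bij_betw[OF H, symmetric])
  also have "\<dots> = (\<Sum>\<sigma> | \<sigma> permutes {0..<m}. signof \<sigma> * (\<Prod>a = 0..<m. P $$ (h a, h (\<sigma> a))))"
    using summand by (intro sum.cong) auto
  finally show ?thesis .
qed

lemma det_principal_sub: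
  assumes P: "P \<in> carrier_mat n n" and U: "U \<subseteq> {..<n}"
  shows "det (principal_sub P U) = det_on P U"
proof -
  define m where "m = card U"
  have "finite U" using U finite_subset by blast
  hence h: "bij_betw (pick U) {0..<m} U" using bij_betw_pick unfolding m_def by (simp add: atLeast0LessThan)
  have "card {a. a < n \<and> a \<in> U} = m"
    unfolding m_def using U by (metis (no_types, lifting) Collect_cong Collect_mem_eq lessThan_iff subsetD)
  hence sub: "principal_sub P U \<in> carrier_mat m m"
    and sub_index: "\<And>a b. a < m \<Longrightarrow> b < m \<Longrightarrow> principal_sub P U $$ (a, b) = P $$ (pick U a, pick U b)"
    unfolding principal_sub_def using P by (auto simp: dim_submatrix submatrix_index)
  show ?thesis
    unfolding det_def'[OF sub] det_on_reindex[OF h]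
    by (intro sum.cong refl arg_cong2[where f="(*)"] prod.cong) (auto simp: sub_index permutes_in_image)
qed

lemma permutes_Diff_iff:
  assumes "S \<subseteq> A"
  shows "\<pi> permutes (A - S) \<longleftrightarrow> \<pi> permutes A \<and> (\<forall>a\<in>S. \<pi> a = a)"
proof
  assume "\<pi> permutes (A - S)"
  thus "\<pi> permutes A \<and> (\<forall>a\<in>S. \<pi> a = a)"
    using permutes_subset[of \<pi> "A - S" A] by (auto simp: permutes_not_in)
next
  assume \<pi>: "\<pi> permutes A \<and> (\<forall>a\<in>S. \<pi> a = a)"
  show "\<pi> permutes (A - S)" unfolding permutes_def
  proof (intro conjI allI impI)
    show "\<pi> x = x" if "x \<notin> A - S" for x
      using that \<pi> permutes_not_in by (cases "x \<in> S") auto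
    show "\<exists>!x. \<pi> x = y" for y
      using \<pi> unfolding permutes_def by blast
  qed
qed

text \<open>\<open>\<lambda> I\<^sub>T + P\<close>, where \<open>[:0, 1:]\<close> is the indeterminate \<open>\<lambda>\<close> and \<open>I\<^sub>T\<close> has ones exactly at the
  diagonal positions in \<open>T\<close>.\<close>
definition X_on_plus_mat :: "nat \<Rightarrow> nat set \<Rightarrow> 'a::comm_ring_1 mat \<Rightarrow> 'a poly mat" where
  "X_on_plus_mat n T P = mat n n (\<lambda>(a, b). (if a = b \<and> a \<in> T then [:0, 1:] else 0) + [:P $$ (a, b):])"

lemma X_on_plus_mat_carrier [simp]: "X_on_plus_mat n T P \<in> carrier_mat n n"
  and dim_X_on_plus_mat [simp]: "dim_row (X_on_plus_mat n T P) = n" "dim_col (X_on_plus_mat n T P) = n"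
  unfolding X_on_plus_mat_def by simp_all

text \<open>Expanding the product in the Leibniz formula for \<open>det (\<lambda> I\<^sub>T + P)\<close> row by row, \<open>S\<close> is the set of
  rows contributing \<open>\<lambda>\<close>; only permutations fixing \<open>S\<close> pointwise, with \<open>S \<subseteq> T\<close>, contribute.\<close>
lemma sum_permutes_X_rows:
  fixes P :: "'a::comm_ring_1 mat"
  assumes S: "S \<subseteq> {0..<n}"
  shows "(\<Sum>\<pi> | \<pi> permutes {0..<n}. signof \<pi> * ((\<Prod>a\<in>S. if \<pi> a = a \<and> a \<in> T then [:0, 1:] else 0)
      * (\<Prod>a\<in>{0..<n} - S. [:P $$ (a, \<pi> a):])))
    = (if S \<subseteq> T then monom (det_on P ({..<n} - S)) (card S) else 0)"
proof -
  have "finite S" using S finite_subset by blast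
  have X_rows: "(\<Prod>a\<in>S. if \<pi> a = a \<and> a \<in> T then [:0, 1:] else (0::'a poly))
      = (if S \<subseteq> T \<and> (\<forall>a\<in>S. \<pi> a = a) then monom 1 (card S) else 0)" for \<pi>
  proof (cases "S \<subseteq> T \<and> (\<forall>a\<in>S. \<pi> a = a)")
    case True
    hence "(\<Prod>a\<in>S. if \<pi> a = a \<and> a \<in> T then [:0, 1:] else (0::'a poly)) = (\<Prod>a\<in>S. [:0, 1:])"
      by (intro prod.cong) auto
    thus ?thesis using True by (simp add: monom_altdef)
  next
    case False
    hence "\<exists>b\<in>S. (if \<pi> b = b \<and> b \<in> T then [:0, 1:] else (0::'a poly)) = 0" by (auto simp: subset_iff)
    thus ?thesis using False \<open>finite S\<close> by (simp add: prod_zero)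
  qed
  have const_rows: "(\<Prod>a\<in>{0..<n} - S. [:P $$ (a, \<pi> a):]) = [:\<Prod>a\<in>{..<n} - S. P $$ (a, \<pi> a):]" for \<pi>
    unfolding prod_to_poly by (simp add: atLeast0LessThan)
  have fixing_S: "{\<pi>. \<pi> permutes {0..<n} \<and> (\<forall>a\<in>S. \<pi> a = a)} = {\<pi>. \<pi> permutes ({..<n} - S)}"
    using permutes_Diff_iff[OF S] by (auto simp: atLeast0LessThan)
  have "(\<Sum>\<pi> | \<pi> permutes {0..<n}. signof \<pi> * ((\<Prod>a\<in>S. if \<pi> a = a \<and> a \<in> T then [:0, 1:] else 0)
      * (\<Prod>a\<in>{0..<n} - S. [:P $$ (a, \<pi> a):])))
    = (\<Sum>\<pi> | \<pi> permutes {0..<n}. if S \<subseteq> T \<and> (\<forall>a\<in>S. \<pi> a = a)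
        then monom (signof \<pi> * (\<Prod>a\<in>{..<n} - S. P $$ (a, \<pi> a))) (card S) else 0)"
    unfolding X_rows const_rows
    by (intro sum.cong refl) (simp add: of_int_poly monom_0[symmetric] mult_monom del: monom_0 of_int_mult)
  also have "\<dots> = (if S \<subseteq> T then monom (det_on P ({..<n} - S)) (card S) else 0)"
    by (simp add: sum.inter_filter[symmetric] finite_permutations fixing_S det_on_def monom_sum)
  finally show ?thesis .
qed

lemma det_X_on_plus_mat:
  fixes P :: "'a::comm_ring_1 mat"
  assumes P: "P \<in> carrier_mat n n" and T: "T \<subseteq> {..<n}"
  shows "det (X_on_plus_mat n T P) = (\<Sum>S\<in>Pow T. monom (det_on P ({..<n} - S)) (card S))"
proof -
  define u where "u = (\<lambda>\<pi> a. if \<pi> a = a \<and> a \<in> T then [:0, 1:] else (0::'a poly))"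
  define v where "v = (\<lambda>\<pi> a. [:P $$ (a, \<pi> a):])"
  have "det (X_on_plus_mat n T P) = (\<Sum>\<pi> | \<pi> permutes {0..<n}. signof \<pi> * (\<Prod>a\<in>{0..<n}. u \<pi> a + v \<pi> a))"
    unfolding det_def'[OF X_on_plus_mat_carrier]
    by (intro sum.cong refl arg_cong2[where f="(*)"] prod.cong)
      (auto simp: X_on_plus_mat_def u_def v_def permutes_in_image)
  also have "\<dots> = (\<Sum>S\<in>Pow {0..<n}. \<Sum>\<pi> | \<pi> permutes {0..<n}.
      signof \<pi> * ((\<Prod>a\<in>S. u \<pi> a) * (\<Prod>a\<in>{0..<n} - S. v \<pi> a)))"
    by (simp add: prod_add sum_distrib_left sum.swap[of _ "{\<pi>. \<pi> permutes {0..<n}}"])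
  also have "\<dots> = (\<Sum>S\<in>Pow {0..<n}. if S \<subseteq> T then monom (det_on P ({..<n} - S)) (card S) else 0)"
    unfolding u_def v_def by (intro sum.cong refl sum_permutes_X_rows) simp
  also have "\<dots> = (\<Sum>S\<in>Pow T. monom (det_on P ({..<n} - S)) (card S))"
  proof -
    have "{S \<in> Pow {0..<n}. S \<subseteq> T} = Pow T" using T by (auto simp: atLeast0LessThan)
    thus ?thesis by (simp add: sum.inter_filter[symmetric])
  qed
  finally show ?thesis .
qed

lemma coeff_det_X_on_plus_mat:
  fixes P :: "'a::comm_ring_1 mat"
  assumes P: "P \<in> carrier_mat n n" and T: "T \<subseteq> {..<n}" and m: "m \<le> n"
  shows "coeff (det (X_on_plus_mat n T P)) m
    = (\<Sum>\<beta> | \<beta> \<subseteq> {..<n} \<and> card \<beta> = n - m \<and> {..<n} - T \<subseteq> \<beta>. det (principal_sub P \<beta>))"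
proof -
  have "finite (Pow T)" using T finite_subset by blast
  hence "coeff (det (X_on_plus_mat n T P)) m = (\<Sum>S | S \<in> Pow T \<and> card S = m. det_on P ({..<n} - S))"
    by (simp add: det_X_on_plus_mat[OF P T] coeff_sum sum.inter_filter[symmetric] if_distrib cong: if_cong)
  also have "\<dots> = (\<Sum>\<beta> | \<beta> \<subseteq> {..<n} \<and> card \<beta> = n - m \<and> {..<n} - T \<subseteq> \<beta>. det_on P \<beta>)"
  proof (rule sum.reindex_bij_witness[where i = "\<lambda>\<beta>. {..<n} - \<beta>" and j = "\<lambda>S. {..<n} - S"])
    fix S assume S: "S \<in> {S. S \<in> Pow T \<and> card S = m}"
    hence "S \<subseteq> {..<n}" using T by auto
    moreover from this have "card ({..<n} - S) = n - m" using S by (simp add: card_Diff_subset finite_subset)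
    ultimately show "{..<n} - ({..<n} - S) = S"
      and "{..<n} - S \<in> {\<beta>. \<beta> \<subseteq> {..<n} \<and> card \<beta> = n - m \<and> {..<n} - T \<subseteq> \<beta>}"
      using S by auto
  next
    fix \<beta> assume \<beta>: "\<beta> \<in> {\<beta>. \<beta> \<subseteq> {..<n} \<and> card \<beta> = n - m \<and> {..<n} - T \<subseteq> \<beta>}"
    hence "finite \<beta>" using finite_subset by blast
    hence "card ({..<n} - \<beta>) = m" using \<beta> m by (simp add: card_Diff_subset)
    thus "{..<n} - ({..<n} - \<beta>) = \<beta>" and "{..<n} - \<beta> \<in> {S. S \<in> Pow T \<and> card S = m}"
      using \<beta> by auto
  qed simp
  also have "\<dots> = (\<Sum>\<beta> | \<beta> \<subseteq> {..<n} \<and> card \<beta> = n - m \<and> {..<n} - T \<subseteq> \<beta>. det (principal_sub P \<beta>))"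
    by (intro sum.cong) (auto simp: det_principal_sub[OF P])
  finally show ?thesis .
qed

abbreviation X_plus_mat :: "nat \<Rightarrow> 'a::comm_ring_1 mat \<Rightarrow> 'a poly mat" where
  "X_plus_mat n C \<equiv> X_on_plus_mat n {..<n} C"

lemma det_X_plus_mat: "C \<in> carrier_mat n n \<Longrightarrow> det (X_plus_mat n C) = char_poly (- C)"
  unfolding char_poly_def char_poly_matrix_def X_on_plus_mat_def
  by (rule arg_cong[of _ _ det], rule eq_matI) auto

lemma coeff_det_X_plus_mat:
  assumes "C \<in> carrier_mat n n" and "m \<le> n"
  shows "coeff (det (X_plus_mat n C)) m = (\<Sum>\<beta>\<in>Jrn (n - m) n. det (principal_sub C \<beta>))"
  unfolding coeff_det_X_on_plus_mat[OF assms(1) order.refl assms(2)] Jrn_def by simp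

section \<open>The coefficients of \<open>adj (\<lambda> I + C)\<close>\<close>

definition coeff_mat :: "'a::zero poly mat \<Rightarrow> nat \<Rightarrow> 'a mat" where
  "coeff_mat M m = mat (dim_row M) (dim_col M) (\<lambda>ij. coeff (M $$ ij) m)"

lemma coeff_mat_carrier [simp]: "M \<in> carrier_mat nr nc \<Longrightarrow> coeff_mat M m \<in> carrier_mat nr nc"
  unfolding coeff_mat_def by simp

lemma coeff_mat_smult_one: "coeff_mat (p \<cdot>\<^sub>m 1\<^sub>m n) m = coeff p m \<cdot>\<^sub>m 1\<^sub>m n"
  unfolding coeff_mat_def by (rule eq_matI) auto

lemma coeff_mat_X_plus_mat_mult:
  assumes C: "C \<in> carrier_mat n n" and Q: "Q \<in> carrier_mat n n"
  shows "coeff_mat (X_plus_mat n C * Q) m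
    = C * coeff_mat Q m + (if m = 0 then 0\<^sub>m n n else coeff_mat Q (m - 1))"
proof (rule eq_matI)
  fix a b assume "a < dim_row (C * coeff_mat Q m + (if m = 0 then 0\<^sub>m n n else coeff_mat Q (m - 1)))"
    and "b < dim_col (C * coeff_mat Q m + (if m = 0 then 0\<^sub>m n n else coeff_mat Q (m - 1)))"
  hence a: "a < n" and b: "b < n" using Q by (auto simp: coeff_mat_def split: if_splits)
  have "(X_plus_mat n C * Q) $$ (a, b)
      = [:0, 1:] * Q $$ (a, b) + (\<Sum>l<n. Polynomial.smult (C $$ (a, l)) (Q $$ (l, b)))"
    using a b Q by (simp add: scalar_prod_def X_on_plus_mat_def distrib_right sum.distrib
        if_distrib[of "\<lambda>x. x * _"] atLeast0LessThan cong: if_cong)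
  thus "coeff_mat (X_plus_mat n C * Q) m $$ (a, b)
      = (C * coeff_mat Q m + (if m = 0 then 0\<^sub>m n n else coeff_mat Q (m - 1))) $$ (a, b)"
    using a b C Q by (simp add: coeff_mat_def scalar_prod_def coeff_sum coeff_pCons' atLeast0LessThan)
qed (use C Q in \<open>auto simp: coeff_mat_def\<close>)

lemma coeff_mat_mult_X_plus_mat:
  assumes C: "C \<in> carrier_mat n n" and Q: "Q \<in> carrier_mat n n"
  shows "coeff_mat (Q * X_plus_mat n C) m
    = coeff_mat Q m * C + (if m = 0 then 0\<^sub>m n n else coeff_mat Q (m - 1))"
proof (rule eq_matI)
  fix a b assume "a < dim_row (coeff_mat Q m * C + (if m = 0 then 0\<^sub>m n n else coeff_mat Q (m - 1)))"
    and "b < dim_col (coeff_mat Q m * C + (if m = 0 then 0\<^sub>m n n else coeff_mat Q (m - 1)))"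
  hence a: "a < n" and b: "b < n" using Q by (auto simp: coeff_mat_def split: if_splits)
  have "(Q * X_plus_mat n C) $$ (a, b)
      = [:0, 1:] * Q $$ (a, b) + (\<Sum>l<n. Polynomial.smult (C $$ (l, b)) (Q $$ (a, l)))"
    using a b Q by (simp add: scalar_prod_def X_on_plus_mat_def distrib_left sum.distrib mult.commute
        if_distrib[of "\<lambda>x. _ * x"] atLeast0LessThan cong: if_cong)
  thus "coeff_mat (Q * X_plus_mat n C) m $$ (a, b)
      = (coeff_mat Q m * C + (if m = 0 then 0\<^sub>m n n else coeff_mat Q (m - 1))) $$ (a, b)"
    using a b C Q by (simp add: coeff_mat_def scalar_prod_def coeff_sum coeff_pCons' atLeast0LessThan mult.commute)
qed (use C Q in \<open>auto simp: coeff_mat_def\<close>)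

definition adj_coeff :: "nat \<Rightarrow> 'a::comm_ring_1 mat \<Rightarrow> nat \<Rightarrow> 'a mat" where
  "adj_coeff n C m = coeff_mat (adj_mat (X_plus_mat n C)) m"

lemma adj_coeff_carrier [simp]: "adj_coeff n C m \<in> carrier_mat n n"
  unfolding adj_coeff_def by (rule coeff_mat_carrier[OF adj_mat(1)[OF X_on_plus_mat_carrier]])

lemma dim_adj_coeff [simp]: "dim_row (adj_coeff n C m) = n" "dim_col (adj_coeff n C m) = n"
  using carrier_matD[OF adj_coeff_carrier] by blast+

lemma adj_coeff_recurrence:
  assumes C: "C \<in> carrier_mat n n"
  shows "C * adj_coeff n C m + (if m = 0 then 0\<^sub>m n n else adj_coeff n C (m - 1))
      = coeff (det (X_plus_mat n C)) m \<cdot>\<^sub>m 1\<^sub>m n"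
    and "adj_coeff n C m * C + (if m = 0 then 0\<^sub>m n n else adj_coeff n C (m - 1))
      = coeff (det (X_plus_mat n C)) m \<cdot>\<^sub>m 1\<^sub>m n"
  using coeff_mat_X_plus_mat_mult[OF C adj_mat(1)[OF X_on_plus_mat_carrier[of n "{..<n}" C]], of m]
    coeff_mat_mult_X_plus_mat[OF C adj_mat(1)[OF X_on_plus_mat_carrier[of n "{..<n}" C]], of m]
  unfolding adj_mat(2,3)[OF X_on_plus_mat_carrier] coeff_mat_smult_one adj_coeff_def by simp_all

lemma adj_coeff_commute:
  assumes C: "C \<in> carrier_mat n n"
  shows "C * adj_coeff n C m = adj_coeff n C m * C"
proof (rule eq_matI)
  fix a b assume "a < dim_row (adj_coeff n C m * C)" "b < dim_col (adj_coeff n C m * C)"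
  hence "a < n" "b < n" using C by auto
  moreover have "(C * adj_coeff n C m + (if m = 0 then 0\<^sub>m n n else adj_coeff n C (m - 1))) $$ (a, b)
      = (adj_coeff n C m * C + (if m = 0 then 0\<^sub>m n n else adj_coeff n C (m - 1))) $$ (a, b)"
    unfolding adj_coeff_recurrence[OF C] ..
  ultimately show "(C * adj_coeff n C m) $$ (a, b) = (adj_coeff n C m * C) $$ (a, b)"
    using C by (cases "m = 0") auto
qed (use C in auto)

lemma adj_coeff_mult_vec_nth:
  assumes C: "C \<in> carrier_mat n n" and m: "m \<le> n" and y: "y \<in> carrier_vec n" and i: "i < n"
  shows "(adj_coeff n C m *\<^sub>v y) $ i
    = (\<Sum>\<beta>\<in>{\<beta>\<in>Jrn (n - m) n. i \<in> \<beta>}. det (principal_sub (replace_col C y i) \<beta>))"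
proof -
  define y' where "y' = map_vec (\<lambda>x. [:x:]) y"
  have y': "y' \<in> carrier_vec n" using y unfolding y'_def by simp
  have Cy: "replace_col C y i \<in> carrier_mat n n" using C by (simp add: replace_col_def)
  have replace_X_plus: "replace_col (X_plus_mat n C) y' i = X_on_plus_mat n ({..<n} - {i}) (replace_col C y i)"
    using C y by (intro eq_matI) (auto simp: replace_col_def X_on_plus_mat_def y'_def)
  have "(adj_coeff n C m *\<^sub>v y) $ i = coeff ((adj_mat (X_plus_mat n C) *\<^sub>v y') $ i) m"
    using i y y' adj_mat(1)[OF X_on_plus_mat_carrier, of n "{..<n}" C]
    by (simp add: scalar_prod_def adj_coeff_def coeff_mat_def y'_def coeff_sum mult.commute)
  also have "\<dots> = coeff (det (X_on_plus_mat n ({..<n} - {i}) (replace_col C y i))) m"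
    unfolding adj_mat_mult_vec_nth[OF X_on_plus_mat_carrier y' i] replace_X_plus ..
  also have "\<dots> = (\<Sum>\<beta>\<in>{\<beta>\<in>Jrn (n - m) n. i \<in> \<beta>}. det (principal_sub (replace_col C y i) \<beta>))"
    unfolding coeff_det_X_on_plus_mat[OF Cy Diff_subset m] Jrn_def using i by (intro sum.cong) auto
  finally show ?thesis .
qed

section \<open>Matrices with a group inverse\<close>

lemma group_inverse_mult_cancel:
  fixes C G X :: "'a::comm_ring_1 mat"
  assumes C: "C \<in> carrier_mat n n" and G: "G \<in> carrier_mat n n" and X: "X \<in> carrier_mat n n"
    and CGC: "C * G * C = C" and GC: "G * C = C * G" and CCX: "C * (C * X) = 0\<^sub>m n n"
  shows "C * X = 0\<^sub>m n n"
proof -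
  have "C * X = G * C * C * X" using CGC GC by simp
  also have "\<dots> = G * (C * (C * X))" using C G X by (simp add: assoc_mult_mat[of _ n n _ n _ n])
  finally show ?thesis using CCX G by simp
qed

lemma group_inverse_mult_vec_cancel:
  fixes C G :: "'a::comm_ring_1 mat"
  assumes C: "C \<in> carrier_mat n n" and G: "G \<in> carrier_mat n n" and v: "v \<in> carrier_vec n"
    and CGC: "C * G * C = C" and GC: "G * C = C * G" and CCv: "C *\<^sub>v (C *\<^sub>v v) = 0\<^sub>v n"
  shows "C *\<^sub>v v = 0\<^sub>v n"
proof -
  have "C *\<^sub>v v = (G * C * C) *\<^sub>v v" using CGC GC by simp
  also have "\<dots> = G *\<^sub>v (C *\<^sub>v (C *\<^sub>v v))" using C G v by (simp add: assoc_mult_mat_vec[of _ n n _ n])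
  finally show ?thesis using CCv G by simp
qed

lemma group_inverse_pow_mult_vec_eq_0_iff:
  fixes C G :: "'a::comm_ring_1 mat"
  assumes C: "C \<in> carrier_mat n n" and G: "G \<in> carrier_mat n n"
    and CGC: "C * G * C = C" and GC: "G * C = C * G"
  shows "v \<in> carrier_vec n \<Longrightarrow> C ^\<^sub>m Suc m *\<^sub>v v = 0\<^sub>v n \<longleftrightarrow> C *\<^sub>v v = 0\<^sub>v n"
proof (induction m arbitrary: v)
  case 0
  thus ?case using C by simp
next
  case (Suc m)
  have Cv: "C *\<^sub>v v \<in> carrier_vec n" using C Suc.prems by simp
  have "C ^\<^sub>m Suc (Suc m) *\<^sub>v v = C ^\<^sub>m Suc m *\<^sub>v (C *\<^sub>v v)"
    using assoc_mult_mat_vec[OF pow_carrier_mat[OF C] C Suc.prems, of "Suc m"] by simp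
  also have "\<dots> = 0\<^sub>v n \<longleftrightarrow> C *\<^sub>v (C *\<^sub>v v) = 0\<^sub>v n" by (rule Suc.IH[OF Cv])
  also have "\<dots> \<longleftrightarrow> C *\<^sub>v v = 0\<^sub>v n"
    using group_inverse_mult_vec_cancel[OF C G Suc.prems CGC GC] C by auto
  finally show ?case .
qed

lemma kernel_dim_group_inverse_pow:
  fixes C G :: "'a::field mat"
  assumes C: "C \<in> carrier_mat n n" and G: "G \<in> carrier_mat n n"
    and CGC: "C * G * C = C" and GC: "G * C = C * G"
  shows "kernel_dim (C ^\<^sub>m Suc m) = kernel_dim C"
proof (rule kernel_dim_cong)
  show "mat_kernel (C ^\<^sub>m Suc m) = mat_kernel C"
    using C group_inverse_pow_mult_vec_eq_0_iff[OF C G CGC GC] unfolding mat_kernel_def by auto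
qed (use C in simp)

text \<open>A matrix with a group inverse has index at most one, so the eigenvalue \<open>0\<close> has no Jordan
  blocks of size greater than one and its algebraic multiplicity is the nullity.\<close>
lemma order_0_char_poly_group_inverse:
  fixes C G :: "complex mat"
  assumes C: "C \<in> carrier_mat n n" and G: "G \<in> carrier_mat n n"
    and CGC: "C * G * C = C" and GC: "G * C = C * G"
  shows "order 0 (char_poly C) = kernel_dim C"
proof -
  obtain n_as where jnf: "jordan_nf C n_as"
    using char_poly_factorized[OF C] jordan_nf_exists[OF C] by blast
  define K where "K = Suc (sum_list (map fst n_as))"
  let ?sizes = "map fst [(m, e)\<leftarrow>n_as. e = 0]"
  have "min K x = x" if "x \<in> set ?sizes" for x
  proof -
    have "x \<le> sum_list (map fst n_as)" using that by (intro member_le_sum_list) auto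
    thus ?thesis unfolding K_def by simp
  qed
  hence min_K: "map (min K) ?sizes = ?sizes" by (rule map_idI)
  have "order 0 (char_poly C) = sum_list ?sizes"
    unfolding jordan_nf_order[OF jnf] by (simp add: case_prod_unfold)
  also have "\<dots> = (\<Sum>m\<leftarrow>?sizes. min K m)" by (simp only: min_K)
  also have "\<dots> = kernel_dim (C ^\<^sub>m K)"
  proof -
    have "char_matrix C 0 = C" using C unfolding char_matrix_def by (intro eq_matI) auto
    thus ?thesis unfolding dim_gen_eigenspace[OF jnf, symmetric] dim_gen_eigenspace_def by simp
  qed
  also have "\<dots> = kernel_dim C"
    unfolding K_def by (rule kernel_dim_group_inverse_pow[OF C G CGC GC])
  finally show ?thesis .
qed

lemma coeffs_det_X_plus_mat_group_inverse:
  fixes C G :: "complex mat"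
  assumes C: "C \<in> carrier_mat n n" and G: "G \<in> carrier_mat n n"
    and CGC: "C * G * C = C" and GC: "G * C = C * G"
  shows "\<forall>j < kernel_dim C. coeff (det (X_plus_mat n C)) j = 0"
    and "coeff (det (X_plus_mat n C)) (kernel_dim C) \<noteq> 0"
proof -
  let ?p = "det (X_plus_mat n C)"
  have "?p \<noteq> 0"
    using degree_monic_char_poly[of "- C" n] C unfolding det_X_plus_mat[OF C] by auto
  moreover have "order 0 ?p = kernel_dim C"
  proof -
    have "- C * - G * - C = - (C * G * C)" using C G by simp
    hence negCGC: "- C * - G * - C = - C" unfolding CGC .
    have "- G * - C = G * C" and "- C * - G = C * G" using C G by simp_all
    hence negGC: "- G * - C = - C * - G" using GC by simp
    have "order 0 ?p = kernel_dim (- C)"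
      unfolding det_X_plus_mat[OF C] using C G by (intro order_0_char_poly_group_inverse[OF _ _ negCGC negGC]) auto
    also have "\<dots> = kernel_dim C"
      using C by (intro kernel_dim_cong) (auto simp: mat_kernel_def uminus_zero_vec_eq)
    finally show ?thesis .
  qed
  ultimately have "monom 1 (kernel_dim C) dvd ?p" and "\<not> monom 1 (Suc (kernel_dim C)) dvd ?p"
    by (simp_all add: monom_1_dvd_iff)
  thus "\<forall>j < kernel_dim C. coeff ?p j = 0" and "coeff ?p (kernel_dim C) \<noteq> 0"
    unfolding monom_1_dvd_iff' by (auto simp: less_Suc_eq)
qed

lemma adj_coeff_annihilated:
  fixes C G :: "'a::comm_ring_1 mat"
  assumes C: "C \<in> carrier_mat n n" and G: "G \<in> carrier_mat n n"
    and CGC: "C * G * C = C" and GC: "G * C = C * G"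
    and low: "\<forall>j<s. coeff (det (X_plus_mat n C)) j = 0" and "m < s"
  shows "C * adj_coeff n C m = 0\<^sub>m n n"
  using \<open>m < s\<close>
proof (induction m)
  case 0
  thus ?case using adj_coeff_recurrence(1)[OF C, of 0] low C by simp
next
  case (Suc m)
  have "C * adj_coeff n C (Suc m) + adj_coeff n C m = 0\<^sub>m n n"
    using adj_coeff_recurrence(1)[OF C, of "Suc m"] low Suc.prems by simp
  hence "C * (C * adj_coeff n C (Suc m) + adj_coeff n C m) = 0\<^sub>m n n" using C by simp
  moreover have "C * (C * adj_coeff n C (Suc m) + adj_coeff n C m)
      = C * (C * adj_coeff n C (Suc m)) + C * adj_coeff n C m"
    by (rule mult_add_distrib_mat) (use C in auto)
  ultimately have "C * (C * adj_coeff n C (Suc m)) + C * adj_coeff n C m = 0\<^sub>m n n" by simp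
  hence "C * (C * adj_coeff n C (Suc m)) = 0\<^sub>m n n" using Suc C by simp
  thus ?case by (rule group_inverse_mult_cancel[OF C G adj_coeff_carrier CGC GC])
qed

text \<open>On the range of \<open>C\<^sup>2\<close>, the coefficient of \<open>\<lambda>\<^sup>s\<close> in \<open>adj (\<lambda> I + C)\<close> acts as a multiple of
  the group inverse of \<open>C\<close>, \<open>s\<close> being the order of the zero of \<open>det (\<lambda> I + C)\<close> at \<open>0\<close>.\<close>
lemma adj_coeff_order_mult_vec:
  fixes C G :: "'a::comm_ring_1 mat"
  assumes C: "C \<in> carrier_mat n n" and G: "G \<in> carrier_mat n n"
    and CGC: "C * G * C = C" and GC: "G * C = C * G"
    and low: "\<forall>j<s. coeff (det (X_plus_mat n C)) j = 0" and w: "w \<in> carrier_vec n"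
  shows "adj_coeff n C s *\<^sub>v (C *\<^sub>v (C *\<^sub>v w)) = coeff (det (X_plus_mat n C)) s \<cdot>\<^sub>v (C *\<^sub>v w)"
proof -
  let ?Q = "adj_coeff n C s" and ?R = "if s = 0 then 0\<^sub>m n n else adj_coeff n C (s - 1)"
  define y where "y = C *\<^sub>v w"
  have y: "y \<in> carrier_vec n" using C w unfolding y_def by simp
  have R: "?R \<in> carrier_mat n n" by simp
  have "?R * C = 0\<^sub>m n n"
    using adj_coeff_annihilated[OF C G CGC GC low, of "s - 1"] adj_coeff_commute[OF C, of "s - 1"] C
    by auto
  moreover have "?R *\<^sub>v y = (?R * C) *\<^sub>v w" unfolding y_def using R C w by simp
  ultimately have Ry: "?R *\<^sub>v y = 0\<^sub>v n" using w by simp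
  have CQy: "(C * ?Q) *\<^sub>v y \<in> carrier_vec n"
    using mult_mat_vec_carrier[OF mult_carrier_mat[OF C adj_coeff_carrier] y] .
  have "?Q *\<^sub>v (C *\<^sub>v y) = (C * ?Q) *\<^sub>v y"
    using C y by (simp add: assoc_mult_mat_vec[of _ n n] adj_coeff_commute[OF C])
  also have "\<dots> = (C * ?Q) *\<^sub>v y + ?R *\<^sub>v y" using CQy Ry by simp
  also have "\<dots> = (C * ?Q + ?R) *\<^sub>v y"
    by (rule add_mult_distrib_mat_vec[symmetric]) (use C R y in auto)
  also have "\<dots> = coeff (det (X_plus_mat n C)) s \<cdot>\<^sub>v y"
    unfolding adj_coeff_recurrence(1)[OF C] using smult_one_mat_mult_vec[OF y] .
  finally show ?thesis unfolding y_def .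
qed

lemma group_inverse_principal_minor_sum_neq_0:
  fixes C G :: "complex mat"
  assumes C: "C \<in> carrier_mat n n" and G: "G \<in> carrier_mat n n"
    and CGC: "C * G * C = C" and GC: "G * C = C * G"
  shows "(\<Sum>\<beta>\<in>Jrn (n - kernel_dim C) n. det (principal_sub C \<beta>)) \<noteq> 0"
  using coeffs_det_X_plus_mat_group_inverse(2)[OF C G CGC GC] rank_nullity_mat[OF C]
  by (simp add: coeff_det_X_plus_mat[OF C])

lemma group_inverse_cramer:
  fixes C G :: "complex mat"
  assumes C: "C \<in> carrier_mat n n" and G: "G \<in> carrier_mat n n"
    and CGC: "C * G * C = C" and GC: "G * C = C * G"
    and w: "w \<in> carrier_vec n" and i: "i < n"
  shows "(\<Sum>\<beta>\<in>{\<beta>\<in>Jrn (n - kernel_dim C) n. i \<in> \<beta>}. det (principal_sub (replace_col C (C *\<^sub>v (C *\<^sub>v w)) i) \<beta>))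
    = (\<Sum>\<beta>\<in>Jrn (n - kernel_dim C) n. det (principal_sub C \<beta>)) * (C *\<^sub>v w) $ i"
proof -
  let ?s = "kernel_dim C"
  have s: "?s \<le> n" using rank_nullity_mat[OF C] by simp
  have "(\<Sum>\<beta>\<in>{\<beta>\<in>Jrn (n - ?s) n. i \<in> \<beta>}. det (principal_sub (replace_col C (C *\<^sub>v (C *\<^sub>v w)) i) \<beta>))
      = (adj_coeff n C ?s *\<^sub>v (C *\<^sub>v (C *\<^sub>v w))) $ i"
    by (rule adj_coeff_mult_vec_nth[OF C s _ i, symmetric]) (use C w in simp)
  also have "\<dots> = coeff (det (X_plus_mat n C)) ?s * (C *\<^sub>v w) $ i"
    using adj_coeff_order_mult_vec[OF C G CGC GC coeffs_det_X_plus_mat_group_inverse(1)[OF C G CGC GC] w]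
      C i by simp
  finally show ?thesis by (simp add: coeff_det_X_plus_mat[OF C s])
qed

section \<open>The Drazin inverse\<close>

lemma drazin_power_group_inverse:
  fixes A AD :: "'a::comm_ring_1 mat"
  assumes A: "A \<in> carrier_mat n n" and AD: "AD \<in> carrier_mat n n"
    and D1: "A ^\<^sub>m (k + 1) * AD = A ^\<^sub>m k" and D2: "AD * A * AD = AD" and D3: "A * AD = AD * A"
  shows "A ^\<^sub>m (k + 1) * AD ^\<^sub>m (k + 1) * A ^\<^sub>m (k + 1) = A ^\<^sub>m (k + 1)"
    and "AD ^\<^sub>m (k + 1) * A ^\<^sub>m (k + 1) = A ^\<^sub>m (k + 1) * AD ^\<^sub>m (k + 1)"
    and "A ^\<^sub>m (k + 1) * (AD ^\<^sub>m (k + 1) * AD) = AD"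
proof -
  define C where "C = A ^\<^sub>m (k + 1)"
  define G where "G = AD ^\<^sub>m (k + 1)"
  have C: "C \<in> carrier_mat n n" and G: "G \<in> carrier_mat n n"
    unfolding C_def G_def using pow_carrier_mat[OF A] pow_carrier_mat[OF AD] by blast+
  have E: "A * AD * (A * AD) = A * AD"
  proof -
    have "A * AD * (A * AD) = A * (AD * A * AD)" using A AD by (simp add: assoc_mult_mat[of _ n n _ n _ n])
    thus ?thesis unfolding D2 .
  qed
  have GC: "G * C = C * G" unfolding C_def G_def
    by (rule pow_mat_mult_commute[OF AD pow_carrier_mat[OF A]])
      (rule pow_mat_mult_commute[OF A AD D3, symmetric])
  have CG: "C * G = A * AD" unfolding C_def G_def
    using pow_mat_mult_distrib[OF A AD D3, of "k + 1"] pow_mat_idempotent[OF E, of k] by simp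
  have "C * G * C = C * (C * G)" using C G GC by (simp add: assoc_mult_mat[of _ n n _ n _ n])
  also have "\<dots> = C * (AD * A)" unfolding CG D3 ..
  also have "\<dots> = (C * AD) * A" using C A AD by (simp add: assoc_mult_mat[of _ n n _ n _ n])
  also have "\<dots> = C" unfolding C_def D1 by simp
  finally show "A ^\<^sub>m (k + 1) * AD ^\<^sub>m (k + 1) * A ^\<^sub>m (k + 1) = A ^\<^sub>m (k + 1)"
    unfolding C_def G_def .
  show "AD ^\<^sub>m (k + 1) * A ^\<^sub>m (k + 1) = A ^\<^sub>m (k + 1) * AD ^\<^sub>m (k + 1)"
    using GC unfolding C_def G_def .
  have "C * (G * AD) = (C * G) * AD" by (rule assoc_mult_mat[symmetric]) (use C G AD in auto)
  also have "\<dots> = AD" unfolding CG D3 D2 ..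
  finally show "A ^\<^sub>m (k + 1) * (AD ^\<^sub>m (k + 1) * AD) = AD" unfolding C_def G_def .
qed

lemma mat_rank_drazin_power:
  fixes A AD :: "complex mat"
  assumes A: "A \<in> carrier_mat n n" and AD: "AD \<in> carrier_mat n n"
    and D1: "A ^\<^sub>m (k + 1) * AD = A ^\<^sub>m k" and D3: "A * AD = AD * A"
  shows "mat_rank (A ^\<^sub>m k) = n - kernel_dim (A ^\<^sub>m (k + 1))"
proof -
  have Ak: "A ^\<^sub>m k = AD * A ^\<^sub>m (k + 1)"
    using D1 pow_mat_mult_commute[OF A AD D3, of "k + 1"] by simp
  have "A ^\<^sub>m k *\<^sub>v v = 0\<^sub>v n" if "v \<in> carrier_vec n" "A ^\<^sub>m (k + 1) *\<^sub>v v = 0\<^sub>v n" for v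
  proof -
    have "A ^\<^sub>m k *\<^sub>v v = AD *\<^sub>v (A ^\<^sub>m (k + 1) *\<^sub>v v)"
      unfolding Ak by (rule assoc_mult_mat_vec) (use that A AD in auto)
    also have "\<dots> = AD *\<^sub>v 0\<^sub>v n" unfolding that(2) ..
    finally show ?thesis using AD by (simp only: mult_mat_vec_zero)
  qed
  moreover have "A ^\<^sub>m (k + 1) *\<^sub>v v = 0\<^sub>v n" if "v \<in> carrier_vec n" "A ^\<^sub>m k *\<^sub>v v = 0\<^sub>v n" for v
  proof -
    have "A ^\<^sub>m (k + 1) = A * A ^\<^sub>m k" using pow_mat_mult_commute[OF A A refl, of k] by simp
    hence "A ^\<^sub>m (k + 1) *\<^sub>v v = (A * A ^\<^sub>m k) *\<^sub>v v" by (simp only:)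
    also have "\<dots> = A *\<^sub>v (A ^\<^sub>m k *\<^sub>v v)" by (rule assoc_mult_mat_vec) (use that A in auto)
    also have "\<dots> = A *\<^sub>v 0\<^sub>v n" unfolding that(2) ..
    finally show ?thesis using A by (simp only: mult_mat_vec_zero)
  qed
  ultimately have "A ^\<^sub>m k *\<^sub>v v = 0\<^sub>v n \<longleftrightarrow> A ^\<^sub>m (k + 1) *\<^sub>v v = 0\<^sub>v n"
    if "v \<in> carrier_vec n" for v
    using that by blast
  hence "kernel_dim (A ^\<^sub>m k) = kernel_dim (A ^\<^sub>m (k + 1))"
    using A by (intro kernel_dim_cong) (auto simp: mat_kernel_def)
  thus ?thesis
    using rank_nullity_mat[OF pow_carrier_mat[OF A, of k]] A unfolding mat_rank_def by simp
qed

lemma drazin_principal_minor_sum_neq_0: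
  fixes A AD :: "complex mat"
  assumes A: "A \<in> carrier_mat n n" and AD: "AD \<in> carrier_mat n n"
    and D1: "A ^\<^sub>m (k + 1) * AD = A ^\<^sub>m k" and D2: "AD * A * AD = AD" and D3: "A * AD = AD * A"
  shows "(\<Sum>\<beta>\<in>Jrn (mat_rank (A ^\<^sub>m k)) n. det (principal_sub (A ^\<^sub>m (k + 1)) \<beta>)) \<noteq> 0"
  unfolding mat_rank_drazin_power[OF A AD D1 D3]
  by (rule group_inverse_principal_minor_sum_neq_0[OF pow_carrier_mat[OF A] pow_carrier_mat[OF AD]
        drazin_power_group_inverse(1,2)[OF A AD D1 D2 D3]])

lemma drazin_cramer:
  fixes A AD :: "complex mat"
  assumes A: "A \<in> carrier_mat n n" and AD: "AD \<in> carrier_mat n n"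
    and D1: "A ^\<^sub>m (k + 1) * AD = A ^\<^sub>m k" and D2: "AD * A * AD = AD" and D3: "A * AD = AD * A"
    and b: "b \<in> carrier_vec n" and i: "i < n"
  shows "(\<Sum>\<beta>\<in>{\<beta>\<in>Jrn (mat_rank (A ^\<^sub>m k)) n. i \<in> \<beta>}.
           det (principal_sub (replace_col (A ^\<^sub>m (k + 1)) (A ^\<^sub>m k *\<^sub>v b) i) \<beta>))
    = (\<Sum>\<beta>\<in>Jrn (mat_rank (A ^\<^sub>m k)) n. det (principal_sub (A ^\<^sub>m (k + 1)) \<beta>)) * (AD *\<^sub>v b) $ i"
proof -
  define C where "C = A ^\<^sub>m (k + 1)"
  define G where "G = AD ^\<^sub>m (k + 1)"
  have C: "C \<in> carrier_mat n n" and G: "G \<in> carrier_mat n n"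
    unfolding C_def G_def using pow_carrier_mat[OF A] pow_carrier_mat[OF AD] by blast+
  note group_inverse = drazin_power_group_inverse[OF A AD D1 D2 D3, folded C_def G_def]
  define w where "w = (G * AD) *\<^sub>v b"
  have w: "w \<in> carrier_vec n" unfolding w_def using G AD b by simp
  have "C *\<^sub>v w = (C * (G * AD)) *\<^sub>v b"
    unfolding w_def by (rule assoc_mult_mat_vec[symmetric]) (use C G AD b in auto)
  hence Cw: "C *\<^sub>v w = AD *\<^sub>v b" unfolding group_inverse(3) .
  have "C *\<^sub>v (C *\<^sub>v w) = A ^\<^sub>m k *\<^sub>v b"
    unfolding Cw using C AD b D1[folded C_def] by (simp flip: assoc_mult_mat_vec)
  thus ?thesis
    using group_inverse_cramer[OF C G group_inverse(1,2) w i] Cw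
    unfolding mat_rank_drazin_power[OF A AD D1 D3] C_def by simp
qed

lemma drazin_cramer_mat:
  fixes A AD B :: "complex mat"
  assumes A: "A \<in> carrier_mat n n" and AD: "AD \<in> carrier_mat n n"
    and D1: "A ^\<^sub>m (k + 1) * AD = A ^\<^sub>m k" and D2: "AD * A * AD = AD" and D3: "A * AD = AD * A"
    and B: "B \<in> carrier_mat n n" and i: "i < n" and j: "j < n"
  shows "(\<Sum>\<beta>\<in>{\<beta>\<in>Jrn (mat_rank (A ^\<^sub>m k)) n. i \<in> \<beta>}.
           det (principal_sub (replace_col (A ^\<^sub>m (k + 1)) (col (A ^\<^sub>m (k + l) * B) j) i) \<beta>))
    = (\<Sum>\<beta>\<in>Jrn (mat_rank (A ^\<^sub>m k)) n. det (principal_sub (A ^\<^sub>m (k + 1)) \<beta>))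
      * (AD * A ^\<^sub>m l * B) $$ (i, j)"
proof -
  have AlB: "A ^\<^sub>m l * B \<in> carrier_mat n n" using mult_carrier_mat[OF pow_carrier_mat[OF A] B] .
  have "A ^\<^sub>m (k + l) * B = A ^\<^sub>m k * (A ^\<^sub>m l * B)"
    using A B by (simp add: pow_mat_add[OF A] assoc_mult_mat[of _ n n _ n _ n])
  hence "col (A ^\<^sub>m (k + l) * B) j = A ^\<^sub>m k *\<^sub>v col (A ^\<^sub>m l * B) j"
    using col_mult2[OF pow_carrier_mat[OF A] AlB j] by simp
  moreover have "(AD * A ^\<^sub>m l * B) $$ (i, j) = (AD *\<^sub>v col (A ^\<^sub>m l * B) j) $ i"
    using A B AD i j by (simp add: assoc_mult_mat[of _ n n _ n _ n])
  ultimately show ?thesis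
    using drazin_cramer[OF A AD D1 D2 D3 _ i, of "col (A ^\<^sub>m l * B) j"] AlB j by simp
qed

theorem theorem5p2:
  fixes A B AD :: "complex mat" and n :: nat and t :: real and i j :: nat
  assumes A: "A \<in> carrier_mat n n" and B: "B \<in> carrier_mat n n"
    and AD: "is_drazin_inverse A AD"
    and i: "i < n" and j: "j < n"
  shows "let k = mat_ind A;
             r = mat_rank (A ^\<^sub>m k);
             Bh = (\<lambda>l::nat. A ^\<^sub>m l * B);
             X = AD * B + mat_sum n (\<lambda>s. (((-1) ^ (s - 1) / fact s) * complex_of_real t ^ s)
                   \<cdot>\<^sub>m (A ^\<^sub>m (s - 1) * B - AD * A ^\<^sub>m s * B)) {1..k};
             \<Delta> = (\<Sum>\<beta>\<in>Jrn r n. det (principal_sub (A ^\<^sub>m (k+1)) \<beta>));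
             N = (\<lambda>l::nat. \<Sum>\<beta>\<in>{\<beta>\<in>Jrn r n. i \<in> \<beta>}.
                   det (principal_sub (replace_col (A ^\<^sub>m (k+1)) (col (Bh l) j) i) \<beta>))
         in X $$ (i, j) = N k / \<Delta> +
              (\<Sum>s = 1..k. ((-1) ^ (s - 1) / fact s) * (Bh (s - 1) $$ (i, j) - N (k + s) / \<Delta>)
                           * complex_of_real t ^ s)"
proof -
  define k where "k = mat_ind A"
  define \<Delta> where "\<Delta> = (\<Sum>\<beta>\<in>Jrn (mat_rank (A ^\<^sub>m k)) n. det (principal_sub (A ^\<^sub>m (k + 1)) \<beta>))"
  have AD_carrier: "AD \<in> carrier_mat n n" and D1: "A ^\<^sub>m (k + 1) * AD = A ^\<^sub>m k"
    and D2: "AD * A * AD = AD" and D3: "A * AD = AD * A"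
    using AD A unfolding is_drazin_inverse_def k_def by auto
  note drazin = A AD_carrier D1 D2 D3
  have "\<Delta> \<noteq> 0" unfolding \<Delta>_def by (rule drazin_principal_minor_sum_neq_0[OF drazin])
  note N = drazin_cramer_mat[OF drazin B i j, folded \<Delta>_def]
  have N0: "(\<Sum>\<beta>\<in>{\<beta>\<in>Jrn (mat_rank (A ^\<^sub>m k)) n. i \<in> \<beta>}.
        det (principal_sub (replace_col (A ^\<^sub>m (k + 1)) (col (A ^\<^sub>m k * B) j) i) \<beta>))
      = \<Delta> * (AD * B) $$ (i, j)"
    using N[of 0] A AD_carrier by simp
  have "(AD * B + mat_sum n (\<lambda>s. (((-1) ^ (s - 1) / fact s) * complex_of_real t ^ s)
          \<cdot>\<^sub>m (A ^\<^sub>m (s - 1) * B - AD * A ^\<^sub>m s * B)) {1..k}) $$ (i, j)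
      = (AD * B) $$ (i, j) + (\<Sum>s = 1..k. (((-1) ^ (s - 1) / fact s) * complex_of_real t ^ s)
          * ((A ^\<^sub>m (s - 1) * B) $$ (i, j) - (AD * A ^\<^sub>m s * B) $$ (i, j)))"
    using A B AD_carrier i j unfolding mat_sum_def by (auto intro!: sum.cong)
  thus ?thesis
    unfolding Let_def k_def[symmetric] \<Delta>_def[symmetric] N0 N
    using \<open>\<Delta> \<noteq> 0\<close> by (auto simp: algebra_simps intro!: sum.cong)
qed

end
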